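(* Let $X\subseteq\mathbb{R}^n$ be a nonempty closed convex set with $0\in X$, $\|\cdot\|$ the Euclidean norm, $D(x\|x')=\tfrac12\|x-x'\|^2$, and suppose $\max_{x,x'\in X}D(x\|x')\le F^2$. Let $\tau\in\mathbb{N}$, $T\in\mathbb{N}$, and let $f_1,\dots,f_{T+\tau}:\mathbb{R}^n\to\mathbb{R}$ be convex differentiable functions with $\|\nabla f_t(x)\|\le L$ for all $x\in X$ and all $t$. Let $x^*\in X$ be a minimizer over $X$ of $f^*(x)=\frac1T\sum_{t=1}^Tf_t(x)$, and suppose each $f_t$ is strongly convex with parameter $\lambda>0$ in the sense that $f_t(x^* )\ge f_t(x)+\langle x^*-x,\nabla f_t(x)\rangle+\frac{\lambda}{2}\|x-x^*\|^2$ for all $x\in X$. Run delayed stochastic gradient descent: $x_1=\dots=x_{\tau+1}=0$, $g_t=\nabla f_t(x_t)$, and for $t=\tau+1,\dots,T+\tau$, $x_{t+1}=\operatorname{argmin}_{x\in X}\|x-(x_t-\eta_tg_{t-\tau})\|$, with learning rate $\eta_t=\frac{1}{\lambda(t-\tau)}$ for $t>\tau$ and $\eta_t=0$ for $t\le\tau$. Then the regret $R[X]=\sum_{t=1}^T\big(f_t(x_t)-f_t(x^* )\big)$ satisfies $$R[X]\le \lambda\tau F^2+\Big[\tfrac12+\tau\Big]\frac{L^2}{\lambda}\big(1+\tau+\log T\big).$$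
   Context: $\log$ denotes the natural logarithm. *)

theory Defs
  imports "HOL-Analysis.Analysis"
begin

end

theory Submission
  imports Defs
begin

text \<open>With step size \<open>1 / (\<lambda> s)\<close>, nonexpansiveness of the projection bounds the linearised
  regret of round \<open>s\<close> by \<open>\<lambda> s / 2\<close> times the decrease of the squared distance to \<open>x\<^sup>*\<close>,
  plus \<open>L\<^sup>2 / (2 \<lambda> s)\<close>; strong convexity subtracts \<open>\<lambda> / 2\<close> times that squared distance,
  which pays for the growth of the weights, so the sum telescopes. With delay \<open>\<tau>\<close> the gradient
  of round \<open>s\<close> is applied at step \<open>s + \<tau>\<close>: the telescope is shifted by \<open>\<tau>\<close>, leaving \<open>\<tau>\<close>
  boundary terms of size at most \<open>\<lambda> F\<^sup>2\<close>, and the stale iterate \<open>x s\<close> lies within \<open>L\<close> times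
  the last \<open>\<tau>\<close> step sizes of \<open>x (s + \<tau>)\<close>, which costs \<open>\<tau> L\<^sup>2 H\<^sub>T / \<lambda>\<close> in total.
  Finally \<open>H\<^sub>T \<le> 1 + ln T\<close>.\<close>

lemma harm_le_1_plus_ln: "harm n \<le> 1 + ln (real n)"
proof (cases "n = 0")
  case False
  then show ?thesis
    using euler_mascheroni_sequence_decreasing[of 1 n] by (simp add: harm_def)
qed (simp add: harm_def)

lemma sum_shifted_harm_le: "(\<Sum>s=1..n. if i < s then 1 / real (s - i) else 0) \<le> harm n"
proof -
  have "(\<Sum>s=1..n. if i < s then 1 / real (s - i) else 0) = harm (n - i)"
  proof (induction n)
    case (Suc n)
    then show ?case
      by (cases "i < Suc n") (simp_all add: Suc_diff_le harm_Suc divide_inverse)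
  qed (simp add: harm_def)
  then show ?thesis
    by (simp add: harm_mono)
qed

lemma sum_delayed_step_sizes_le:
  "(\<Sum>s=1..n. \<Sum>k<tau. if tau < s + k then 1 / real (s + k - tau) else 0) \<le> real tau * harm n"
proof -
  have inner: "(\<Sum>s=1..n. if tau < s + k then 1 / real (s + k - tau) else 0) \<le> harm n"
    if "k < tau" for k
  proof -
    have "tau < s + k \<longleftrightarrow> tau - k < s" "s + k - tau = s - (tau - k)" for s
      using that by arith+
    then show ?thesis
      using sum_shifted_harm_le[where n = n and i = "tau - k"] by (simp only:)
  qed
  have "(\<Sum>s=1..n. \<Sum>k<tau. if tau < s + k then 1 / real (s + k - tau) else 0)
      = (\<Sum>k<tau. \<Sum>s=1..n. if tau < s + k then 1 / real (s + k - tau) else 0)"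
    by (rule sum.swap)
  also have "\<dots> \<le> (\<Sum>k<tau. harm n)"
    using inner by (intro sum_mono) simp
  also have "\<dots> = real tau * harm n"
    by simp
  finally show ?thesis .
qed

lemma sum_shift_diff:
  fixes d :: "nat \<Rightarrow> 'a::ab_group_add"
  shows "(\<Sum>s=1..n. d (s + k) - d s) = (\<Sum>j=1..k. d (n + j) - d j)"
proof (induction n)
  case (Suc n)
  have "(\<Sum>j=1..k. d (Suc n + j) - d (n + j)) = d (Suc n + k) - d (Suc n)"
    using sum_Suc_diff[of 1 k "\<lambda>j. d (n + j)"] by simp
  then show ?case
    using Suc by (simp add: sum_subtractf algebra_simps)
qed simp

lemma sum_weighted_telescope:
  fixes d :: "nat \<Rightarrow> real"
  shows "(\<Sum>s=1..n. real s * (d (s + k) - d (s + k + 1)))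
    = (\<Sum>s=1..n. d (s + k)) - real n * d (n + k + 1)"
  by (induction n) (simp_all add: algebra_simps)

text \<open>The weights grow by one per round and the subtracted \<open>d s\<close> pays for that growth,
  except for the \<open>k\<close> boundary terms created by the shift.\<close>

lemma sum_delayed_telescope_le:
  fixes d :: "nat \<Rightarrow> real"
  assumes nonneg: "\<And>t. 0 \<le> d t" and bound: "\<And>j. j \<in> {1..k} \<Longrightarrow> d (n + j) \<le> B"
  shows "(\<Sum>s=1..n. real s * (d (s + k) - d (s + k + 1)) - d s) \<le> real k * B"
proof -
  have "(\<Sum>s=1..n. real s * (d (s + k) - d (s + k + 1)) - d s)
      = (\<Sum>j=1..k. d (n + j) - d j) - real n * d (n + k + 1)"
    using sum_weighted_telescope[where n = n and d = d and k = k]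
      sum_shift_diff[where n = n and d = d and k = k]
    by (simp add: sum_subtractf)
  also have "\<dots> \<le> (\<Sum>j=1..k. d (n + j) - d j)"
    using nonneg[of "n + k + 1"] by simp
  also have "\<dots> \<le> (\<Sum>j=1..k. B)"
  proof (rule sum_mono)
    fix j
    assume "j \<in> {1..k}"
    then show "d (n + j) - d j \<le> B"
      using bound[of j] nonneg[of j] by linarith
  qed
  finally show ?thesis
    by simp
qed

lemma norm_diff_le_sum_increments:
  fixes x :: "nat \<Rightarrow> 'a::real_normed_vector"
  assumes "\<And>k. k < m \<Longrightarrow> norm (x (s + Suc k) - x (s + k)) \<le> b (s + k)"
  shows "norm (x (s + m) - x s) \<le> (\<Sum>k<m. b (s + k))"
proof -
  have "x (s + m) - x s = (\<Sum>k<m. x (s + Suc k) - x (s + k))"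
    using sum_lessThan_telescope[of "\<lambda>k. x (s + k)" m] by simp
  also have "norm \<dots> \<le> (\<Sum>k<m. norm (x (s + Suc k) - x (s + k)))"
    by (rule norm_sum)
  also have "\<dots> \<le> (\<Sum>k<m. b (s + k))"
    using assms by (intro sum_mono) auto
  finally show ?thesis .
qed

lemma norm_closest_point_step_le:
  fixes X :: "'a::euclidean_space set"
  assumes "convex X" "closed X" "z \<in> X"
  shows "norm (closest_point X (z - v) - z) \<le> norm v"
proof -
  have "norm (closest_point X (z - v) - z) = dist (closest_point X (z - v)) (closest_point X z)"
    using assms(3) by (simp add: closest_point_self dist_norm)
  also have "\<dots> \<le> dist (z - v) z"
    using assms by (intro closest_point_lipschitz) auto
  finally show ?thesis
    by (simp add: dist_norm)
qed

lemma closest_point_step_inner_le: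
  fixes X :: "'a::euclidean_space set"
  assumes "convex X" "closed X" "y \<in> X" "\<eta> > 0"
  shows "(z - y) \<bullet> g \<le> ((norm (z - y))\<^sup>2 - (norm (closest_point X (z - \<eta> *\<^sub>R g) - y))\<^sup>2) / (2 * \<eta>)
    + \<eta> / 2 * (norm g)\<^sup>2"
proof -
  have "norm (closest_point X (z - \<eta> *\<^sub>R g) - y) = dist (closest_point X (z - \<eta> *\<^sub>R g)) (closest_point X y)"
    using assms(3) by (simp add: closest_point_self dist_norm)
  also have "\<dots> \<le> dist (z - \<eta> *\<^sub>R g) y"
    using assms by (intro closest_point_lipschitz) auto
  also have "\<dots> = norm ((z - y) - \<eta> *\<^sub>R g)"
    by (simp add: dist_norm algebra_simps)
  finally have "(norm (closest_point X (z - \<eta> *\<^sub>R g) - y))\<^sup>2 \<le> (norm ((z - y) - \<eta> *\<^sub>R g))\<^sup>2"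
    by (simp add: power_mono)
  also have "\<dots> = (norm (z - y))\<^sup>2 - 2 * \<eta> * ((z - y) \<bullet> g) + \<eta>\<^sup>2 * (norm g)\<^sup>2"
    using dot_norm_neg[of "z - y" "\<eta> *\<^sub>R g"] assms(4) by (simp add: power_mult_distrib)
  finally show ?thesis
    using assms(4) by (simp add: field_simps power2_eq_square)
qed

text \<open>The gradient is taken at the stale point \<open>u\<close> but the step is made from \<open>z\<close>;
  the mismatch costs at most \<open>L * \<delta>\<close>.\<close>

lemma delayed_projected_step_regret_le:
  fixes X :: "'a::euclidean_space set"
  assumes "convex X" "closed X" "y \<in> X" "\<eta> > 0"
    and strong: "a \<ge> b + (y - u) \<bullet> g + lam / 2 * (norm (u - y))\<^sup>2"
    and grad_le: "norm g \<le> L" and drift_le: "norm (u - z) \<le> \<delta>"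
  shows "b - a \<le> ((norm (z - y))\<^sup>2 - (norm (closest_point X (z - \<eta> *\<^sub>R g) - y))\<^sup>2) / (2 * \<eta>)
    - lam / 2 * (norm (u - y))\<^sup>2 + \<eta> / 2 * L\<^sup>2 + L * \<delta>"
proof -
  have "(y - u) \<bullet> g = - ((z - y) \<bullet> g) - (u - z) \<bullet> g"
    by (simp add: inner_diff_left)
  moreover have "(z - y) \<bullet> g \<le> ((norm (z - y))\<^sup>2 - (norm (closest_point X (z - \<eta> *\<^sub>R g) - y))\<^sup>2) / (2 * \<eta>)
      + \<eta> / 2 * (norm g)\<^sup>2"
    using assms(1-4) by (rule closest_point_step_inner_le)
  moreover have "\<eta> / 2 * (norm g)\<^sup>2 \<le> \<eta> / 2 * L\<^sup>2"
    using grad_le \<open>\<eta> > 0\<close> by (intro mult_left_mono power_mono) auto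
  moreover have "(u - z) \<bullet> g \<le> L * \<delta>"
  proof -
    have "(u - z) \<bullet> g \<le> norm (u - z) * norm g"
      by (rule norm_cauchy_schwarz)
    also have "\<dots> \<le> \<delta> * L"
      using drift_le grad_le order_trans[OF norm_ge_zero drift_le] by (intro mult_mono) auto
    finally show ?thesis
      by (simp add: mult.commute)
  qed
  ultimately show ?thesis
    using strong by linarith
qed

locale delayed_sgd =
  fixes X :: "'a::euclidean_space set"
    and tau T :: nat
    and lam L :: real
    and grad :: "nat \<Rightarrow> 'a \<Rightarrow> 'a"
    and x :: "nat \<Rightarrow> 'a"
    and eta :: "nat \<Rightarrow> real"
  assumes closed: "closed X" and convex: "convex X" and zero_in: "0 \<in> X"
    and lam_pos: "lam > 0"
    and grad_bound: "\<lbrakk>t \<in> {1..T+tau}; y \<in> X\<rbrakk> \<Longrightarrow> norm (grad t y) \<le> L"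
    and eta_def: "eta t = (if tau < t then 1 / (lam * real (t - tau)) else 0)"
    and x_init: "t \<in> {1..tau+1} \<Longrightarrow> x t = 0"
    and x_step: "t \<in> {tau+1..T+tau} \<Longrightarrow>
      x (t + 1) = closest_point X (x t - eta t *\<^sub>R grad (t - tau) (x (t - tau)))"
begin

lemma iterate_in_set:
  assumes "t \<in> {1..T+tau+1}"
  shows "x t \<in> X"
proof (cases "t \<le> tau + 1")
  case True
  then show ?thesis
    using assms x_init zero_in by simp
next
  case False
  then have "t - 1 \<in> {tau+1..T+tau}" and "t = t - 1 + 1"
    using assms by auto
  then show ?thesis
    using x_step[of "t - 1"] closest_point_in_set[OF closed] zero_in by force
qed

lemma step_norm_le:
  assumes "j \<in> {1..T+tau}"
  shows "norm (x (Suc j) - x j) \<le> L * eta j"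
proof (cases "tau < j")
  case True
  have "x (Suc j) = closest_point X (x j - eta j *\<^sub>R grad (j - tau) (x (j - tau)))"
    using x_step[of j] assms True by simp
  moreover have "x j \<in> X"
    using assms by (intro iterate_in_set) auto
  ultimately have "norm (x (Suc j) - x j) \<le> norm (eta j *\<^sub>R grad (j - tau) (x (j - tau)))"
    by (metis norm_closest_point_step_le convex closed)
  also have "\<dots> \<le> eta j * L"
  proof -
    have "norm (grad (j - tau) (x (j - tau))) \<le> L"
      using assms True by (intro grad_bound iterate_in_set) auto
    moreover have "eta j \<ge> 0"
      using eta_def[of j] lam_pos True by simp
    ultimately show ?thesis
      by (simp add: mult_left_mono)
  qed
  finally show ?thesis
    by (simp add: mult.commute)
next
  case False
  then show ?thesis
    using assms x_init[of j] x_init[of "Suc j"] eta_def[of j] by simp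
qed

lemma drift_le:
  assumes "s \<in> {1..T}"
  shows "norm (x s - x (s + tau)) \<le> L * (\<Sum>k<tau. eta (s + k))"
proof -
  have "norm (x (s + tau) - x s) \<le> (\<Sum>k<tau. L * eta (s + k))"
    using assms by (intro norm_diff_le_sum_increments) (auto intro!: step_norm_le)
  then show ?thesis
    by (simp add: norm_minus_commute sum_distrib_left)
qed

lemma round_regret_le:
  assumes "y \<in> X" "s \<in> {1..T}"
    and strong: "f y \<ge> f (x s) + (y - x s) \<bullet> grad s (x s) + lam / 2 * (norm (x s - y))\<^sup>2"
  shows "f (x s) - f y \<le> lam / 2 * (real s * ((norm (x (s + tau) - y))\<^sup>2
      - (norm (x (s + tau + 1) - y))\<^sup>2) - (norm (x s - y))\<^sup>2)
    + L\<^sup>2 / (2 * lam) * inverse (real s)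
    + L\<^sup>2 / lam * (\<Sum>k<tau. if tau < s + k then 1 / real (s + k - tau) else 0)"
proof -
  have eta_s: "eta (s + tau) = 1 / (lam * real s)"
    using eta_def assms(2) by simp
  have next_iterate: "x (s + tau + 1) = closest_point X (x (s + tau) - eta (s + tau) *\<^sub>R grad s (x s))"
    using x_step[of "s + tau"] assms(2) by simp
  have "f (x s) - f y \<le> ((norm (x (s + tau) - y))\<^sup>2 - (norm (x (s + tau + 1) - y))\<^sup>2) / (2 * eta (s + tau))
      - lam / 2 * (norm (x s - y))\<^sup>2 + eta (s + tau) / 2 * L\<^sup>2 + L * (L * (\<Sum>k<tau. eta (s + k)))"
    unfolding next_iterate
  proof (rule delayed_projected_step_regret_le[OF convex closed \<open>y \<in> X\<close> _ strong])
    show "eta (s + tau) > 0"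
      using eta_s assms(2) lam_pos by simp
    show "norm (grad s (x s)) \<le> L"
      using assms(2) by (intro grad_bound iterate_in_set) auto
    show "norm (x s - x (s + tau)) \<le> L * (\<Sum>k<tau. eta (s + k))"
      using assms(2) by (rule drift_le)
  qed
  also have "(\<Sum>k<tau. eta (s + k)) = (\<Sum>k<tau. if tau < s + k then 1 / real (s + k - tau) else 0) / lam"
  proof -
    have "eta (s + k) = (if tau < s + k then 1 / real (s + k - tau) else 0) / lam" for k
      by (simp add: eta_def)
    then show ?thesis
      by (simp add: sum_divide_distrib)
  qed
  finally show ?thesis
    using eta_s assms(2) lam_pos by (simp add: field_simps power2_eq_square)
qed

theorem regret_le:
  assumes "y \<in> X" and diam: "\<And>u v. \<lbrakk>u \<in> X; v \<in> X\<rbrakk> \<Longrightarrow> (1/2) * (norm (u - v))\<^sup>2 \<le> F\<^sup>2"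
    and strong: "\<And>s. s \<in> {1..T} \<Longrightarrow>
      f s y \<ge> f s (x s) + (y - x s) \<bullet> grad s (x s) + lam / 2 * (norm (x s - y))\<^sup>2"
  shows "(\<Sum>s=1..T. f s (x s) - f s y) \<le> lam * real tau * F\<^sup>2 + (1/2 + real tau) * (L\<^sup>2 / lam) * harm T"
proof -
  define d where "d t = (norm (x t - y))\<^sup>2" for t
  define e where "e s = (\<Sum>k<tau. if tau < s + k then 1 / real (s + k - tau) else (0::real))" for s
  have "(\<Sum>s=1..T. f s (x s) - f s y) \<le> (\<Sum>s=1..T. lam / 2 * (real s * (d (s + tau) - d (s + tau + 1)) - d s)
      + L\<^sup>2 / (2 * lam) * inverse (real s) + L\<^sup>2 / lam * e s)"
  proof (rule sum_mono)
    fix s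
    assume "s \<in> {1..T}"
    then show "f s (x s) - f s y \<le> lam / 2 * (real s * (d (s + tau) - d (s + tau + 1)) - d s)
        + L\<^sup>2 / (2 * lam) * inverse (real s) + L\<^sup>2 / lam * e s"
      using round_regret_le[OF \<open>y \<in> X\<close> \<open>s \<in> {1..T}\<close> strong[OF \<open>s \<in> {1..T}\<close>]]
      unfolding d_def e_def by simp
  qed
  also have "\<dots> = lam / 2 * (\<Sum>s=1..T. real s * (d (s + tau) - d (s + tau + 1)) - d s)
      + L\<^sup>2 / (2 * lam) * harm T + L\<^sup>2 / lam * (\<Sum>s=1..T. e s)"
    by (simp add: sum.distrib sum_distrib_left harm_def)
  also have "\<dots> \<le> lam / 2 * (real tau * (2 * F\<^sup>2)) + L\<^sup>2 / (2 * lam) * harm T + L\<^sup>2 / lam * (real tau * harm T)"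
  proof -
    have "d (T + j) \<le> 2 * F\<^sup>2" if "j \<in> {1..tau}" for j
      using diam[of "x (T + j)" y] iterate_in_set[of "T + j"] \<open>y \<in> X\<close> that unfolding d_def by auto
    then have "(\<Sum>s=1..T. real s * (d (s + tau) - d (s + tau + 1)) - d s) \<le> real tau * (2 * F\<^sup>2)"
      by (intro sum_delayed_telescope_le) (auto simp: d_def)
    moreover have "(\<Sum>s=1..T. e s) \<le> real tau * harm T"
      unfolding e_def by (rule sum_delayed_step_sizes_le)
    ultimately show ?thesis
      using lam_pos by (intro add_mono mult_left_mono order.refl) auto
  qed
  also have "\<dots> = lam * real tau * F\<^sup>2 + (1/2 + real tau) * (L\<^sup>2 / lam) * harm T"
    using lam_pos by (simp add: field_simps)
  finally show ?thesis .
qed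

end

theorem theorem4:
  fixes X :: "(real ^ 'n) set"
    and F L lam :: real
    and tau T :: nat
    and f :: "nat \<Rightarrow> real ^ 'n \<Rightarrow> real"
    and grad :: "nat \<Rightarrow> real ^ 'n \<Rightarrow> real ^ 'n"
    and xstar :: "real ^ 'n"
    and x :: "nat \<Rightarrow> real ^ 'n"
    and eta :: "nat \<Rightarrow> real"
  assumes X_ne: "X \<noteq> {}" and X_closed: "closed X" and X_convex: "convex X"
    and X_0: "0 \<in> X"
    and diam: "\<forall>y\<in>X. \<forall>y'\<in>X. (1/2) * (norm (y - y'))\<^sup>2 \<le> F\<^sup>2"
    and f_convex: "\<forall>t\<in>{1..T+tau}. convex_on UNIV (f t)"
    and f_grad: "\<forall>t\<in>{1..T+tau}. \<forall>y. (f t has_derivative (\<lambda>h. grad t y \<bullet> h)) (at y)"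
    and grad_bound: "\<forall>t\<in>{1..T+tau}. \<forall>y\<in>X. norm (grad t y) \<le> L"
    and xstar_in: "xstar \<in> X"
    and xstar_min: "\<forall>y\<in>X. (1 / real T) * (\<Sum>t=1..T. f t xstar) \<le> (1 / real T) * (\<Sum>t=1..T. f t y)"
    and lam_pos: "lam > 0"
    and strong: "\<forall>t\<in>{1..T+tau}. \<forall>y\<in>X.
        f t xstar \<ge> f t y + (xstar - y) \<bullet> grad t y + (lam / 2) * (norm (y - xstar))\<^sup>2"
    and eta_def: "\<forall>t. eta t = (if t > tau then 1 / (lam * real (t - tau)) else 0)"
    and x_init: "\<forall>t\<in>{1..tau+1}. x t = 0"
    and x_step: "\<forall>t\<in>{tau+1..T+tau}.
        x (t + 1) = closest_point X (x t - eta t *\<^sub>R grad (t - tau) (x (t - tau)))"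
  shows "(\<Sum>t=1..T. f t (x t) - f t xstar)
           \<le> lam * real tau * F\<^sup>2 + (1/2 + real tau) * (L\<^sup>2 / lam) * (1 + real tau + ln (real T))"
proof -
  interpret delayed_sgd X tau T lam L grad x eta
    using X_closed X_convex X_0 lam_pos grad_bound eta_def x_init x_step by unfold_locales auto
  have "(\<Sum>t=1..T. f t (x t) - f t xstar) \<le> lam * real tau * F\<^sup>2 + (1/2 + real tau) * (L\<^sup>2 / lam) * harm T"
    using xstar_in diam strong by (intro regret_le) (auto simp: iterate_in_set)
  also have "\<dots> \<le> lam * real tau * F\<^sup>2 + (1/2 + real tau) * (L\<^sup>2 / lam) * (1 + real tau + ln (real T))"
    using harm_le_1_plus_ln[of T] lam_pos by (intro add_left_mono mult_left_mono) auto
  finally show ?thesis .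
qed

end
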